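(* Assume Assumption 1, Assumption 2 and the null hypothesis $H_0:\ T_i(1)=T_i(0)$ for all $i$, and condition on $\boldsymbol{T}(1),\boldsymbol{T}(0)$. Then for each $1\le k\le K$, $$\mathbb{E}\{D_k(N_k-D_k)\mid\boldsymbol{T}(1),\boldsymbol{T}(0),N_k\}=N_k(N_k-1)h_k(1-h_k)\frac{n_k}{n_k-1},$$ $$\mathbb{E}\{N_{1k}(N_k-N_{1k})\mid\boldsymbol{T}(1),\boldsymbol{T}(0),N_k\}=N_k(N_k-1)\phi_k(1-\phi_k).$$
   Context: There are $n$ units. Unit $i$ has potential event times $T_i(1),T_i(0)\ge 0$, potential censoring times $C_i(1),C_i(0)\in[0,\infty]$, and treatment indicator $Z_i\in\{0,1\}$; bold letters denote $n$-vectors. Assumption 1: conditional on $\boldsymbol{T}(1),\boldsymbol{T}(0),\boldsymbol{C}(1),\boldsymbol{C}(0)$, the $Z_i$ are i.i.d. Bernoulli$(p_1)$, $p_1=1-p_0\in(0,1)$. Assumption 2: $(\boldsymbol{C}(1),\boldsymbol{C}(0))$ is independent of $(\boldsymbol{T}(1),\boldsymbol{T}(0))$ and the pairs $(C_i(1),C_i(0))$ are i.i.d. across $i$. $G_z(c)=\Pr(C_i(z)\ge c)$, $G(t)=p_1G_1(t)+p_0G_0(t)$. Realized: $W_i=\min\{T_i,C_i\}$, $\Delta_i=\mathbb{1}(T_i\le C_i)$ with $T_i=Z_iT_i(1)+(1-Z_i)T_i(0)$, $C_i=Z_iC_i(1)+(1-Z_i)C_i(0)$. Let $t_1<\dots<t_K$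 be the distinct values of $\{T_i(0)\}$, $d_k=\#\{i:T_i(0)=t_k\}$, $n_k=\#\{i:T_i(0)\ge t_k\}$, $h_k=d_k/n_k$, $\phi_k=p_1G_1(t_k)/G(t_k)$; $N_{1k}=\sum_iZ_i\mathbb{1}(W_i\ge t_k)$, $N_k=\sum_i\mathbb{1}(W_i\ge t_k)$, $D_k=\sum_i\Delta_i\mathbb{1}(W_i=t_k)$. Convention $0/0:=0$. *)

theory Defs
  imports "HOL-Probability.Probability"
begin

text \<open>Event times are real, censoring times are extended reals
(values in [0,\<infinity>]). Randomness lives in a probability space M; Z i, C1 i, C0 i are random
variables; the event times T1, T0 are fixed (we condition on them).\<close>

definition realT :: "(nat \<Rightarrow> 'a \<Rightarrow> bool) \<Rightarrow> (nat \<Rightarrow> real) \<Rightarrow> (nat \<Rightarrow> real) \<Rightarrow> nat \<Rightarrow> 'a \<Rightarrow> real" where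
  "realT Z T1 T0 i \<omega> = (if Z i \<omega> then T1 i else T0 i)"

definition realC :: "(nat \<Rightarrow> 'a \<Rightarrow> bool) \<Rightarrow> (nat \<Rightarrow> 'a \<Rightarrow> ereal) \<Rightarrow> (nat \<Rightarrow> 'a \<Rightarrow> ereal) \<Rightarrow> nat \<Rightarrow> 'a \<Rightarrow> ereal" where
  "realC Z C1 C0 i \<omega> = (if Z i \<omega> then C1 i \<omega> else C0 i \<omega>)"

definition realW where
  "realW Z T1 T0 C1 C0 i \<omega> = min (ereal (realT Z T1 T0 i \<omega>)) (realC Z C1 C0 i \<omega>)"

definition realDelta where
  "realDelta Z T1 T0 C1 C0 i \<omega> = (ereal (realT Z T1 T0 i \<omega>) \<le> realC Z C1 C0 i \<omega>)"

definition N1at :: "nat \<Rightarrow> (nat \<Rightarrow> 'a \<Rightarrow> bool) \<Rightarrow> (nat \<Rightarrow> real) \<Rightarrow> (nat \<Rightarrow> real) \<Rightarrow> (nat \<Rightarrow> 'a \<Rightarrow> ereal) \<Rightarrow> (nat \<Rightarrow> 'a \<Rightarrow> ereal) \<Rightarrow> real \<Rightarrow> 'a \<Rightarrow> nat" where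
  "N1at n Z T1 T0 C1 C0 t \<omega> = card {i. i < n \<and> Z i \<omega> \<and> realW Z T1 T0 C1 C0 i \<omega> \<ge> ereal t}"

definition Nat_at :: "nat \<Rightarrow> (nat \<Rightarrow> 'a \<Rightarrow> bool) \<Rightarrow> (nat \<Rightarrow> real) \<Rightarrow> (nat \<Rightarrow> real) \<Rightarrow> (nat \<Rightarrow> 'a \<Rightarrow> ereal) \<Rightarrow> (nat \<Rightarrow> 'a \<Rightarrow> ereal) \<Rightarrow> real \<Rightarrow> 'a \<Rightarrow> nat" where
  "Nat_at n Z T1 T0 C1 C0 t \<omega> = card {i. i < n \<and> realW Z T1 T0 C1 C0 i \<omega> \<ge> ereal t}"

definition Dat :: "nat \<Rightarrow> (nat \<Rightarrow> 'a \<Rightarrow> bool) \<Rightarrow> (nat \<Rightarrow> real) \<Rightarrow> (nat \<Rightarrow> real) \<Rightarrow> (nat \<Rightarrow> 'a \<Rightarrow> ereal) \<Rightarrow> (nat \<Rightarrow> 'a \<Rightarrow> ereal) \<Rightarrow> real \<Rightarrow> 'a \<Rightarrow> nat" where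
  "Dat n Z T1 T0 C1 C0 t \<omega> = card {i. i < n \<and> realDelta Z T1 T0 C1 C0 i \<omega> \<and> realW Z T1 T0 C1 C0 i \<omega> = ereal t}"

definition d_at :: "nat \<Rightarrow> (nat \<Rightarrow> real) \<Rightarrow> real \<Rightarrow> nat" where
  "d_at n T0 t = card {i. i < n \<and> T0 i = t}"

definition n_at :: "nat \<Rightarrow> (nat \<Rightarrow> real) \<Rightarrow> real \<Rightarrow> nat" where
  "n_at n T0 t = card {i. i < n \<and> T0 i \<ge> t}"

definition h_at :: "nat \<Rightarrow> (nat \<Rightarrow> real) \<Rightarrow> real \<Rightarrow> real" where
  "h_at n T0 t = real (d_at n T0 t) / real (n_at n T0 t)"

text \<open>G_z(c) = P(C_i(z) \<ge> c) (the same for every i by Assumption 2; we use unit 0),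
  phi_k = p1 G_1(t_k) / G(t_k) with G = p1 G_1 + p0 G_0 and 0/0 = 0.\<close>
definition Gsurv :: "'a measure \<Rightarrow> (nat \<Rightarrow> 'a \<Rightarrow> ereal) \<Rightarrow> real \<Rightarrow> real" where
  "Gsurv M C c = measure M {\<omega> \<in> space M. C 0 \<omega> \<ge> ereal c}"

definition phi_at :: "'a measure \<Rightarrow> real \<Rightarrow> (nat \<Rightarrow> 'a \<Rightarrow> ereal) \<Rightarrow> (nat \<Rightarrow> 'a \<Rightarrow> ereal) \<Rightarrow> real \<Rightarrow> real" where
  "phi_at M p1 C1 C0 t = p1 * Gsurv M C1 t / (p1 * Gsurv M C1 t + (1 - p1) * Gsurv M C0 t)"

text \<open>Conditional expectation of X given the discrete variable Y takes the value m
  (meaningful when P(Y = m) > 0).\<close>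
definition disc_cond_exp :: "'a measure \<Rightarrow> ('a \<Rightarrow> real) \<Rightarrow> ('a \<Rightarrow> nat) \<Rightarrow> nat \<Rightarrow> real" where
  "disc_cond_exp M X Y m =
     (\<integral>\<omega>. X \<omega> * indicator {\<omega> \<in> space M. Y \<omega> = m} \<omega> \<partial>M) / measure M {\<omega> \<in> space M. Y \<omega> = m}"

definition unitvec :: "(nat \<Rightarrow> 'a \<Rightarrow> bool) \<Rightarrow> (nat \<Rightarrow> 'a \<Rightarrow> ereal) \<Rightarrow> (nat \<Rightarrow> 'a \<Rightarrow> ereal) \<Rightarrow> nat \<Rightarrow> 'a \<Rightarrow> bool \<times> ereal \<times> ereal" where
  "unitvec Z C1 C0 i \<omega> = (Z i \<omega>, C1 i \<omega>, C0 i \<omega>)"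

definition unitspace :: "(bool \<times> ereal \<times> ereal) measure" where
  "unitspace = count_space UNIV \<Otimes>\<^sub>M (borel \<Otimes>\<^sub>M borel)"

end

theory Submission
  imports Defs
begin

(*
  Under H0 a unit with T_i(0) >= t is at risk at t exactly when its realized censoring time is
  at least t. So the units of the risk set {i. T_i(0) >= t} are independent trials that succeed
  with the common probability q = p1 G1(t) + p0 G0(t), and N_k is binomial(n_k, q).
  D_k (N_k - D_k) and N_1k (N_k - N_1k) both count ordered pairs i ~= j of successful units of two
  disjoint kinds (T_i(0) = t versus T_i(0) > t, resp. treated versus control). Fixing the
  outcomes of i and j leaves a binomial(n_k - 2, q) count that has to equal m - 2, and
  m (m - 1) C(n_k, m) = n_k (n_k - 1) C(n_k - 2, m - 2). Summing over the d_k (n_k - d_k) pairs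
  with success probabilities q, q, resp. over the n_k (n_k - 1) pairs with probabilities
  p1 G1(t) = q phi_k and p0 G0(t) = q (1 - phi_k), gives the two formulas.
*)

definition successes :: "('i \<Rightarrow> 'a \<Rightarrow> 'b) \<Rightarrow> 'b set \<Rightarrow> 'i set \<Rightarrow> 'a \<Rightarrow> nat" where
  "successes X A J \<omega> = card {k \<in> J. X k \<omega> \<in> A}"

lemma successes_Un_index:
  "finite J \<Longrightarrow> finite J' \<Longrightarrow> J \<inter> J' = {} \<Longrightarrow>
    successes X A (J \<union> J') \<omega> = successes X A J \<omega> + successes X A J' \<omega>"
  unfolding successes_def by (subst card_Un_disjoint[symmetric]) (auto intro: arg_cong[where f = card])

lemma successes_Un_values:
  "finite J \<Longrightarrow> A \<inter> A' = {} \<Longrightarrow>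
    successes X (A \<union> A') J \<omega> = successes X A J \<omega> + successes X A' J \<omega>"
  unfolding successes_def by (subst card_Un_disjoint[symmetric]) (auto intro: arg_cong[where f = card])

lemma successes_mult_successes:
  assumes "finite P" "finite Q" "P \<inter> Q = {} \<or> B \<inter> B' = {}"
  shows "successes X B P \<omega> * successes X B' Q \<omega>
    = card {(i, j) \<in> P \<times> Q. i \<noteq> j \<and> X i \<omega> \<in> B \<and> X j \<omega> \<in> B'}"
proof -
  have "{(i, j) \<in> P \<times> Q. i \<noteq> j \<and> X i \<omega> \<in> B \<and> X j \<omega> \<in> B'}
      = {k \<in> P. X k \<omega> \<in> B} \<times> {k \<in> Q. X k \<omega> \<in> B'}"
    using assms(3) by auto
  then show ?thesis by (simp add: successes_def card_cartesian_product)
qed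

lemma successes_remove_two:
  assumes "finite R" "i \<in> R" "j \<in> R" "i \<noteq> j" "X i \<omega> \<in> A" "X j \<omega> \<in> A"
  shows "successes X A R \<omega> = successes X A (R - {i, j}) \<omega> + 2"
proof -
  have "successes X A R \<omega> = successes X A ({i, j} \<union> (R - {i, j})) \<omega>"
    using assms(2,3) by (simp add: insert_absorb)
  also have "\<dots> = successes X A {i, j} \<omega> + successes X A (R - {i, j}) \<omega>"
    by (rule successes_Un_index) (use assms(1) in auto)
  also have "{k \<in> {i, j}. X k \<omega> \<in> A} = {i, j}"
    using assms(5,6) by auto
  then have "successes X A {i, j} \<omega> = 2"
    using assms(4) by (simp add: successes_def)
  finally show ?thesis by simp
qed

lemma pair_successes_less_two:
  assumes "finite R" "i \<in> R" "j \<in> R" "i \<noteq> j" "B \<subseteq> A" "B' \<subseteq> A" "m < 2"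
  shows "{\<omega> \<in> space M. X i \<omega> \<in> B \<and> X j \<omega> \<in> B' \<and> successes X A R \<omega> = m} = {}"
proof (rule equals0I)
  fix \<omega>
  assume \<omega>: "\<omega> \<in> {\<omega> \<in> space M. X i \<omega> \<in> B \<and> X j \<omega> \<in> B' \<and> successes X A R \<omega> = m}"
  then have "successes X A R \<omega> = successes X A (R - {i, j}) \<omega> + 2"
    using assms(5,6) by (intro successes_remove_two[OF assms(1-4)]) auto
  with \<omega> assms(7) show False
    by simp
qed

lemma successes_eq_Union_patterns:
  "{\<omega> \<in> space M. (\<forall>k\<in>F. X k \<omega> \<in> B k) \<and> successes X A J \<omega> = r}
    = (\<Union>T\<in>{T. T \<subseteq> J \<and> card T = r}. {\<omega> \<in> space M. (\<forall>k\<in>F. X k \<omega> \<in> B k) \<and> {k \<in> J. X k \<omega> \<in> A} = T})"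
  by (auto simp: successes_def)

lemma times_binomial_minus2_eq:
  assumes "2 \<le> k"
  shows "k * (k - 1) * (n choose k) = n * (n - 1) * ((n - 2) choose (k - 2))"
proof -
  have "k * (n choose k) = n * ((n - 1) choose (k - 1))"
    using assms by (intro times_binomial_minus1_eq) simp
  moreover have "(k - 1) * ((n - 1) choose (k - 1)) = (n - 1) * ((n - 2) choose (k - 2))"
    using assms times_binomial_minus1_eq[of "k - 1" "n - 1"] by (simp add: numeral_2_eq_2)
  ultimately show ?thesis
    by (metis mult.assoc mult.commute)
qed

lemma card_off_diagonal: "finite R \<Longrightarrow> card {(i, j) \<in> R \<times> R. i \<noteq> j} = card R * (card R - 1)"
proof -
  assume "finite R"
  moreover have "{(i, j) \<in> R \<times> R. i \<noteq> j} = R \<times> R - (\<lambda>i. (i, i)) ` R"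
    by auto
  moreover have "card ((\<lambda>i. (i, i)) ` R) = card R"
    by (rule card_image) (auto intro: inj_onI)
  ultimately show ?thesis
    by (simp add: card_Diff_subset card_cartesian_product image_subset_iff diff_mult_distrib2)
qed

lemma (in prob_space) integral_card_events:
  assumes "finite J" "\<And>j. j \<in> J \<Longrightarrow> E j \<in> events"
  shows "(\<integral>\<omega>. real (card {j \<in> J. \<omega> \<in> E j}) \<partial>M) = (\<Sum>j\<in>J. prob (E j))"
proof -
  have "real (card {j \<in> J. \<omega> \<in> E j}) = (\<Sum>j\<in>J. indicator (E j) \<omega>)" for \<omega>
    using assms(1) by (simp add: indicator_def Collect_conj_eq)
  then have "(\<integral>\<omega>. real (card {j \<in> J. \<omega> \<in> E j}) \<partial>M) = (\<Sum>j\<in>J. \<integral>\<omega>. indicator (E j) \<omega> \<partial>M)"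
    using assms(2) by (simp add: Bochner_Integration.integral_sum less_top[symmetric])
  also have "\<dots> = (\<Sum>j\<in>J. prob (E j))"
    using assms(2) by (simp add: Int_absorb2 sets.sets_into_space)
  finally show ?thesis .
qed

section \<open>Independent trials with a common success probability\<close>

locale indep_trials = prob_space M for M :: "'a measure" +
  fixes S :: "'b measure" and X :: "'i \<Rightarrow> 'a \<Rightarrow> 'b" and I :: "'i set"
    and A :: "'b set" and q :: real
  assumes indep: "indep_vars (\<lambda>_. S) X I"
    and sets_A: "A \<in> sets S"
    and prob_A: "\<And>k. k \<in> I \<Longrightarrow> prob {\<omega> \<in> space M. X k \<omega> \<in> A} = q"
begin

lemma measurable_X: "k \<in> I \<Longrightarrow> X k \<in> measurable M S"
  using indep by (simp add: indep_vars_def)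

lemma events_X: "k \<in> I \<Longrightarrow> B \<in> sets S \<Longrightarrow> {\<omega> \<in> space M. X k \<omega> \<in> B} \<in> events"
  using measurable_sets[OF measurable_X] by (simp add: vimage_def Int_def conj_commute)

lemma prob_not_A:
  assumes "k \<in> I"
  shows "prob {\<omega> \<in> space M. X k \<omega> \<in> space S - A} = 1 - q"
proof -
  have "{\<omega> \<in> space M. X k \<omega> \<in> space S - A} = space M - {\<omega> \<in> space M. X k \<omega> \<in> A}"
    using measurable_space[OF measurable_X[OF assms]] by auto
  then show ?thesis
    using prob_compl[OF events_X[OF assms sets_A]] prob_A[OF assms] by simp
qed

lemma events_all_in:
  "finite J \<Longrightarrow> J \<subseteq> I \<Longrightarrow> (\<And>k. k \<in> J \<Longrightarrow> B k \<in> sets S) \<Longrightarrow>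
    {\<omega> \<in> space M. \<forall>k\<in>J. X k \<omega> \<in> B k} \<in> events"
  by (rule sets.sets_Collect_finite_All) (auto intro: events_X)

lemma prob_all_in:
  assumes "finite J" "J \<subseteq> I" "\<And>k. k \<in> J \<Longrightarrow> B k \<in> sets S"
  shows "prob {\<omega> \<in> space M. \<forall>k\<in>J. X k \<omega> \<in> B k} = (\<Prod>k\<in>J. prob {\<omega> \<in> space M. X k \<omega> \<in> B k})"
proof (cases "J = {}")
  case False
  have "{\<omega> \<in> space M. \<forall>k\<in>J. X k \<omega> \<in> B k} = (\<Inter>k\<in>J. X k -` B k \<inter> space M)"
    using False by auto
  then show ?thesis
    using indep_varsD[OF indep False assms(1,2)] assms(3) by (simp add: vimage_def Int_def conj_commute)
qed (simp add: prob_space)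

context
  fixes F J :: "'i set" and B :: "'i \<Rightarrow> 'b set"
  assumes finite: "finite F" "finite J" and subset: "F \<subseteq> I" "J \<subseteq> I"
    and disjoint: "F \<inter> J = {}" and sets_B: "\<And>k. k \<in> F \<Longrightarrow> B k \<in> sets S"
begin

lemma pattern_eq_all_in:
  assumes "T \<subseteq> J"
  shows "{\<omega> \<in> space M. (\<forall>k\<in>F. X k \<omega> \<in> B k) \<and> {k \<in> J. X k \<omega> \<in> A} = T}
    = {\<omega> \<in> space M. \<forall>k\<in>F \<union> J. X k \<omega> \<in> (if k \<in> F then B k else if k \<in> T then A else space S - A)}"
  using assms disjoint subset measurable_space[OF measurable_X] by (auto; blast)

lemma events_pattern:
  assumes "T \<subseteq> J"
  shows "{\<omega> \<in> space M. (\<forall>k\<in>F. X k \<omega> \<in> B k) \<and> {k \<in> J. X k \<omega> \<in> A} = T} \<in> events"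
  unfolding pattern_eq_all_in[OF assms]
  by (rule events_all_in) (use finite subset sets_B sets_A in auto)

lemma prob_pattern:
  assumes "T \<subseteq> J"
  shows "prob {\<omega> \<in> space M. (\<forall>k\<in>F. X k \<omega> \<in> B k) \<and> {k \<in> J. X k \<omega> \<in> A} = T}
    = (\<Prod>k\<in>F. prob {\<omega> \<in> space M. X k \<omega> \<in> B k}) * q ^ card T * (1 - q) ^ (card J - card T)"
proof -
  let ?B = "\<lambda>k. if k \<in> F then B k else if k \<in> T then A else space S - A"
  have "prob {\<omega> \<in> space M. (\<forall>k\<in>F. X k \<omega> \<in> B k) \<and> {k \<in> J. X k \<omega> \<in> A} = T}
      = (\<Prod>k\<in>F \<union> J. prob {\<omega> \<in> space M. X k \<omega> \<in> ?B k})"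
    unfolding pattern_eq_all_in[OF assms]
    by (rule prob_all_in) (use finite subset sets_B sets_A in auto)
  also have "\<dots> = (\<Prod>k\<in>F. prob {\<omega> \<in> space M. X k \<omega> \<in> B k}) * (\<Prod>k\<in>J. if k \<in> T then q else 1 - q)"
  proof -
    have "(\<Prod>k\<in>J. prob {\<omega> \<in> space M. X k \<omega> \<in> ?B k}) = (\<Prod>k\<in>J. if k \<in> T then q else 1 - q)"
      using disjoint subset by (intro prod.cong) (auto simp: prob_A prob_not_A[simplified] subset_iff)
    moreover have "(\<Prod>k\<in>F. prob {\<omega> \<in> space M. X k \<omega> \<in> ?B k}) = (\<Prod>k\<in>F. prob {\<omega> \<in> space M. X k \<omega> \<in> B k})"
      by (intro prod.cong) auto
    ultimately show ?thesis
      using finite disjoint by (simp add: prod.union_disjoint)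
  qed
  also have "(\<Prod>k\<in>J. if k \<in> T then q else 1 - q) = q ^ card T * (1 - q) ^ (card J - card T)"
    using assms finite by (simp add: prod.If_cases Int_absorb1 Diff_eq[symmetric] card_Diff_subset finite_subset)
  finally show ?thesis by (simp only: mult.assoc)
qed

lemma prob_successes_eq:
  "prob {\<omega> \<in> space M. (\<forall>k\<in>F. X k \<omega> \<in> B k) \<and> successes X A J \<omega> = r}
    = (\<Prod>k\<in>F. prob {\<omega> \<in> space M. X k \<omega> \<in> B k}) * real (card J choose r) * q ^ r * (1 - q) ^ (card J - r)"
proof -
  let ?pattern = "\<lambda>T. {\<omega> \<in> space M. (\<forall>k\<in>F. X k \<omega> \<in> B k) \<and> {k \<in> J. X k \<omega> \<in> A} = T}"
  have "prob {\<omega> \<in> space M. (\<forall>k\<in>F. X k \<omega> \<in> B k) \<and> successes X A J \<omega> = r}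
      = (\<Sum>T\<in>{T. T \<subseteq> J \<and> card T = r}. prob (?pattern T))"
    unfolding successes_eq_Union_patterns using finite
    by (intro finite_measure_finite_Union) (auto simp: events_pattern disjoint_family_on_def)
  also have "\<dots> = (\<Sum>T\<in>{T. T \<subseteq> J \<and> card T = r}.
      (\<Prod>k\<in>F. prob {\<omega> \<in> space M. X k \<omega> \<in> B k}) * q ^ r * (1 - q) ^ (card J - r))"
    by (intro sum.cong) (auto simp: prob_pattern)
  also have "\<dots> = (\<Prod>k\<in>F. prob {\<omega> \<in> space M. X k \<omega> \<in> B k}) * real (card J choose r) * q ^ r * (1 - q) ^ (card J - r)"
    using finite by (simp add: n_subsets)
  finally show ?thesis .
qed

lemma events_successes_eq:
  "{\<omega> \<in> space M. (\<forall>k\<in>F. X k \<omega> \<in> B k) \<and> successes X A J \<omega> = r} \<in> events"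
  unfolding successes_eq_Union_patterns using finite by (auto intro!: events_pattern)

end

lemma prob_successes_eq_pos:
  assumes "finite R" "R \<subseteq> I" "prob {\<omega> \<in> space M. successes X A R \<omega> = m} > 0"
  shows "m \<le> card R" and "0 < m \<Longrightarrow> q \<noteq> 0"
proof -
  have prob_eq: "prob {\<omega> \<in> space M. successes X A R \<omega> = m}
      = real (card R choose m) * q ^ m * (1 - q) ^ (card R - m)"
    using prob_successes_eq[of "{}" R "\<lambda>_. {}" m] assms(1,2) by simp
  show "m \<le> card R"
  proof (rule ccontr)
    assume "\<not> m \<le> card R"
    then show False
      using assms(3) unfolding prob_eq by (simp add: not_le binomial_eq_0)
  qed
  show "q \<noteq> 0" if "0 < m"
  proof
    assume "q = 0"
    then show False
      using assms(3) that unfolding prob_eq by (simp add: zero_power)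
  qed
qed

lemma prob_successes_eq_shift:
  assumes "finite R" "R \<subseteq> I" "2 \<le> m"
  shows "real m * (real m - 1) * prob {\<omega> \<in> space M. successes X A R \<omega> = m}
    = real (card R) * (real (card R) - 1) * q\<^sup>2
      * (real (card R - 2 choose (m - 2)) * q ^ (m - 2) * (1 - q) ^ (card R - m))"
proof -
  have "real m * (real m - 1) * real (card R choose m) = real (m * (m - 1) * (card R choose m))"
    using assms(3) by (simp add: of_nat_diff)
  also have "\<dots> = real (card R * (card R - 1) * (card R - 2 choose (m - 2)))"
    using times_binomial_minus2_eq[OF assms(3)] by (simp only:)
  also have "\<dots> = real (card R) * (real (card R) - 1) * real (card R - 2 choose (m - 2))"
    by (cases "card R") (simp_all add: algebra_simps)
  finally have binomial: "real m * (real m - 1) * real (card R choose m)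
      = real (card R) * (real (card R) - 1) * real (card R - 2 choose (m - 2))" .
  have "q ^ m = q\<^sup>2 * q ^ (m - 2)"
    using assms(3) by (metis le_add_diff_inverse power_add)
  then show ?thesis
    using prob_successes_eq[of "{}" R "\<lambda>_. {}" m] assms(1,2) binomial
    by (simp add: mult_ac)
qed

lemma prob_pair_successes:
  assumes R: "finite R" "R \<subseteq> I" "i \<in> R" "j \<in> R" "i \<noteq> j"
    and B: "B \<in> sets S" "B \<subseteq> A" "B' \<in> sets S" "B' \<subseteq> A" and m: "2 \<le> m"
  shows "prob {\<omega> \<in> space M. X i \<omega> \<in> B \<and> X j \<omega> \<in> B' \<and> successes X A R \<omega> = m}
    = prob {\<omega> \<in> space M. X i \<omega> \<in> B} * prob {\<omega> \<in> space M. X j \<omega> \<in> B'}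
      * (real (card R - 2 choose (m - 2)) * q ^ (m - 2) * (1 - q) ^ (card R - m))"
proof -
  let ?B = "\<lambda>k. if k = i then B else B'"
  have events_eq: "{\<omega> \<in> space M. X i \<omega> \<in> B \<and> X j \<omega> \<in> B' \<and> successes X A R \<omega> = m}
      = {\<omega> \<in> space M. (\<forall>k\<in>{i, j}. X k \<omega> \<in> ?B k) \<and> successes X A (R - {i, j}) \<omega> = m - 2}"
  proof (intro Collect_cong)
    fix \<omega>
    have pair_iff: "(\<forall>k\<in>{i, j}. X k \<omega> \<in> ?B k) \<longleftrightarrow> X i \<omega> \<in> B \<and> X j \<omega> \<in> B'"
      using R(5) by simp
    show "(\<omega> \<in> space M \<and> X i \<omega> \<in> B \<and> X j \<omega> \<in> B' \<and> successes X A R \<omega> = m)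
      \<longleftrightarrow> (\<omega> \<in> space M \<and> (\<forall>k\<in>{i, j}. X k \<omega> \<in> ?B k) \<and> successes X A (R - {i, j}) \<omega> = m - 2)"
    proof (cases "X i \<omega> \<in> B \<and> X j \<omega> \<in> B'")
      case True
      then have "successes X A R \<omega> = successes X A (R - {i, j}) \<omega> + 2"
        using B(2,4) by (intro successes_remove_two[OF R(1,3-5)]) auto
      then show ?thesis
        using pair_iff m by auto
    qed (use pair_iff in auto)
  qed
  have "prob {\<omega> \<in> space M. X i \<omega> \<in> B \<and> X j \<omega> \<in> B' \<and> successes X A R \<omega> = m}
      = (\<Prod>k\<in>{i, j}. prob {\<omega> \<in> space M. X k \<omega> \<in> ?B k})
        * real (card (R - {i, j}) choose (m - 2)) * q ^ (m - 2) * (1 - q) ^ (card (R - {i, j}) - (m - 2))"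
    unfolding events_eq by (rule prob_successes_eq) (use R B in auto)
  also have "card (R - {i, j}) = card R - 2"
    using R by (simp add: card_Diff_subset)
  also have "card R - 2 - (m - 2) = card R - m"
    using m by simp
  also have "(\<Prod>k\<in>{i, j}. prob {\<omega> \<in> space M. X k \<omega> \<in> ?B k})
      = prob {\<omega> \<in> space M. X i \<omega> \<in> B} * prob {\<omega> \<in> space M. X j \<omega> \<in> B'}"
    using R(5) by simp
  finally show ?thesis
    by (simp only: mult.assoc)
qed

lemma integral_successes_mult_successes:
  assumes "finite P" "finite Q" "P \<subseteq> I" "Q \<subseteq> I" "P \<inter> Q = {} \<or> B \<inter> B' = {}"
    and "B \<in> sets S" "B' \<in> sets S" "E \<in> events"
  shows "(\<integral>\<omega>. real (successes X B P \<omega>) * real (successes X B' Q \<omega>) * indicator E \<omega> \<partial>M)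
    = (\<Sum>(i, j)\<in>{(i, j) \<in> P \<times> Q. i \<noteq> j}. prob ({\<omega> \<in> space M. X i \<omega> \<in> B \<and> X j \<omega> \<in> B'} \<inter> E))"
proof -
  let ?pairs = "{(i, j) \<in> P \<times> Q. i \<noteq> j}"
  let ?E = "\<lambda>(i, j). {\<omega> \<in> space M. X i \<omega> \<in> B \<and> X j \<omega> \<in> B'} \<inter> E"
  have "real (successes X B P \<omega>) * real (successes X B' Q \<omega>) * indicator E \<omega>
      = real (card {p \<in> ?pairs. \<omega> \<in> ?E p})" if "\<omega> \<in> space M" for \<omega>
  proof -
    have "{p \<in> ?pairs. \<omega> \<in> ?E p}
        = (if \<omega> \<in> E then {(i, j) \<in> P \<times> Q. i \<noteq> j \<and> X i \<omega> \<in> B \<and> X j \<omega> \<in> B'} else {})"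
      using that by auto
    then show ?thesis
      using successes_mult_successes[OF assms(1,2,5), of X \<omega>] by (simp flip: of_nat_mult)
  qed
  then have "(\<integral>\<omega>. real (successes X B P \<omega>) * real (successes X B' Q \<omega>) * indicator E \<omega> \<partial>M)
      = (\<integral>\<omega>. real (card {p \<in> ?pairs. \<omega> \<in> ?E p}) \<partial>M)"
    by (intro Bochner_Integration.integral_cong) auto
  also have "\<dots> = (\<Sum>p\<in>?pairs. prob (?E p))"
  proof (rule integral_card_events)
    show "finite ?pairs"
      using assms(1,2) by (auto intro: finite_subset[of _ "P \<times> Q"])
    show "?E p \<in> events" if "p \<in> ?pairs" for p
      using that assms(3,4,6-8) events_X
      by (auto simp: Collect_conj_eq2 split: prod.splits intro!: sets.Int)
  qed
  finally show ?thesis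
    by (simp only: case_prod_beta')
qed

lemma cond_exp_successes_mult_successes:
  assumes R: "finite R" "R \<subseteq> I"
    and PQ: "P \<subseteq> R" "Q \<subseteq> R" "P \<inter> Q = {} \<or> B \<inter> B' = {}"
    and B: "B \<in> sets S" "B \<subseteq> A" "B' \<in> sets S" "B' \<subseteq> A"
    and prob_B: "\<And>k. k \<in> P \<Longrightarrow> prob {\<omega> \<in> space M. X k \<omega> \<in> B} = b"
    and prob_B': "\<And>k. k \<in> Q \<Longrightarrow> prob {\<omega> \<in> space M. X k \<omega> \<in> B'} = b'"
    and pos: "prob {\<omega> \<in> space M. successes X A R \<omega> = m} > 0"
  shows "disc_cond_exp M (\<lambda>\<omega>. real (successes X B P \<omega>) * real (successes X B' Q \<omega>)) (successes X A R) m
    = real (card {(i, j) \<in> P \<times> Q. i \<noteq> j}) * b * b' * (real m * (real m - 1))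
      / (real (card R) * (real (card R) - 1) * q\<^sup>2)"
proof -
  let ?pairs = "{(i, j) \<in> P \<times> Q. i \<noteq> j}"
  define Em where "Em = {\<omega> \<in> space M. successes X A R \<omega> = m}"
  have fin: "finite P" "finite Q" "P \<subseteq> I" "Q \<subseteq> I"
    using R PQ finite_subset by auto
  have "Em \<in> events"
    using events_successes_eq[of "{}" R "\<lambda>_. {}" m] R unfolding Em_def by simp
  then have integral: "(\<integral>\<omega>. real (successes X B P \<omega>) * real (successes X B' Q \<omega>) * indicator Em \<omega> \<partial>M)
      = (\<Sum>(i, j)\<in>?pairs. prob ({\<omega> \<in> space M. X i \<omega> \<in> B \<and> X j \<omega> \<in> B'} \<inter> Em))"
    by (rule integral_successes_mult_successes[OF fin PQ(3) B(1,3)])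
  have pair_event: "{\<omega> \<in> space M. X i \<omega> \<in> B \<and> X j \<omega> \<in> B'} \<inter> Em
      = {\<omega> \<in> space M. X i \<omega> \<in> B \<and> X j \<omega> \<in> B' \<and> successes X A R \<omega> = m}" for i j
    by (auto simp: Em_def)
  show ?thesis
  proof (cases "2 \<le> m")
    case False
    have "prob {\<omega> \<in> space M. X i \<omega> \<in> B \<and> X j \<omega> \<in> B' \<and> successes X A R \<omega> = m} = 0"
      if "(i, j) \<in> ?pairs" for i j
    proof -
      have "i \<in> R" "j \<in> R" "i \<noteq> j"
        using that PQ by auto
      with False have "{\<omega> \<in> space M. X i \<omega> \<in> B \<and> X j \<omega> \<in> B' \<and> successes X A R \<omega> = m} = {}"
        by (intro pair_successes_less_two[OF R(1) _ _ _ B(2,4)]) auto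
      then show ?thesis
        by (simp only: measure_empty)
    qed
    then have "(\<Sum>(i, j)\<in>?pairs. prob {\<omega> \<in> space M. X i \<omega> \<in> B \<and> X j \<omega> \<in> B' \<and> successes X A R \<omega> = m}) = 0"
      by (intro sum.neutral) auto
    moreover have "real m * (real m - 1) = 0"
      using False by (cases m) auto
    ultimately show ?thesis
      unfolding disc_cond_exp_def Em_def[symmetric] integral pair_event by simp
  next
    case True
    define W where "W = real (card R - 2 choose (m - 2)) * q ^ (m - 2) * (1 - q) ^ (card R - m)"
    have "prob {\<omega> \<in> space M. X i \<omega> \<in> B \<and> X j \<omega> \<in> B' \<and> successes X A R \<omega> = m} = b * b' * W"
      if "(i, j) \<in> ?pairs" for i j
      using that PQ prob_B prob_B' prob_pair_successes[OF R _ _ _ B True, of i j]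
      by (auto simp: W_def)
    then have sum: "(\<Sum>(i, j)\<in>?pairs. prob ({\<omega> \<in> space M. X i \<omega> \<in> B \<and> X j \<omega> \<in> B'} \<inter> Em))
        = real (card ?pairs) * b * b' * W"
      unfolding pair_event by (simp add: case_prod_beta')
    have key: "real m * (real m - 1) * prob Em = real (card R) * (real (card R) - 1) * q\<^sup>2 * W"
      using prob_successes_eq_shift[OF R True] by (simp add: Em_def W_def)
    have nonzero: "prob Em \<noteq> 0" "real m * (real m - 1) \<noteq> 0"
      using pos True by (auto simp: Em_def)
    have denominator: "real (card R) * (real (card R) - 1) * q\<^sup>2 \<noteq> 0"
      using key nonzero by (metis mult_eq_0_iff)
    have "W / prob Em = real m * (real m - 1) / (real (card R) * (real (card R) - 1) * q\<^sup>2)"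
      unfolding frac_eq_eq[OF nonzero(1) denominator] using key by (simp only: mult.commute)
    then show ?thesis
      unfolding disc_cond_exp_def Em_def[symmetric] integral sum
      by (simp only: times_divide_eq_right[symmetric])
  qed
qed

lemma cond_exp_successes_disjoint_groups:
  assumes R: "finite R" "R \<subseteq> I" and PQ: "P \<subseteq> R" "Q \<subseteq> R" "P \<inter> Q = {}"
    and pos: "prob {\<omega> \<in> space M. successes X A R \<omega> = m} > 0"
  shows "disc_cond_exp M (\<lambda>\<omega>. real (successes X A P \<omega>) * real (successes X A Q \<omega>)) (successes X A R) m
    = real m * (real m - 1) * real (card P) * real (card Q) / (real (card R) * (real (card R) - 1))"
proof -
  have "disc_cond_exp M (\<lambda>\<omega>. real (successes X A P \<omega>) * real (successes X A Q \<omega>)) (successes X A R) m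
      = real (card {(i, j) \<in> P \<times> Q. i \<noteq> j}) * q * q * (real m * (real m - 1))
        / (real (card R) * (real (card R) - 1) * q\<^sup>2)"
    by (rule cond_exp_successes_mult_successes) (use R PQ prob_A pos sets_A in auto)
  also have "{(i, j) \<in> P \<times> Q. i \<noteq> j} = P \<times> Q"
    using PQ(3) by auto
  also have "real (card (P \<times> Q)) * q * q * (real m * (real m - 1)) / (real (card R) * (real (card R) - 1) * q\<^sup>2)
      = real m * (real m - 1) * real (card P) * real (card Q) / (real (card R) * (real (card R) - 1))"
  proof (cases "2 \<le> m")
    case True
    then have "real (card R) * (real (card R) - 1) \<noteq> 0" "q \<noteq> 0"
      using prob_successes_eq_pos[OF R pos] by simp_all
    then show ?thesis
      by (simp add: card_cartesian_product field_simps power2_eq_square)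
  next
    case False
    then have "real m * (real m - 1) = 0"
      by (cases m) auto
    then show ?thesis
      by (simp only: mult_zero_left mult_zero_right div_0)
  qed
  finally show ?thesis .
qed

lemma cond_exp_successes_disjoint_values:
  assumes R: "finite R" "R \<subseteq> I"
    and B: "B \<in> sets S" "B \<subseteq> A" "B' \<in> sets S" "B' \<subseteq> A" "B \<inter> B' = {}"
    and prob_B: "\<And>k. k \<in> R \<Longrightarrow> prob {\<omega> \<in> space M. X k \<omega> \<in> B} = b"
    and prob_B': "\<And>k. k \<in> R \<Longrightarrow> prob {\<omega> \<in> space M. X k \<omega> \<in> B'} = b'"
    and pos: "prob {\<omega> \<in> space M. successes X A R \<omega> = m} > 0"
  shows "disc_cond_exp M (\<lambda>\<omega>. real (successes X B R \<omega>) * real (successes X B' R \<omega>)) (successes X A R) m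
    = real m * (real m - 1) * (b / q) * (b' / q)"
proof -
  have "disc_cond_exp M (\<lambda>\<omega>. real (successes X B R \<omega>) * real (successes X B' R \<omega>)) (successes X A R) m
      = real (card {(i, j) \<in> R \<times> R. i \<noteq> j}) * b * b' * (real m * (real m - 1))
        / (real (card R) * (real (card R) - 1) * q\<^sup>2)"
    by (rule cond_exp_successes_mult_successes[OF R subset_refl subset_refl disjI2[OF B(5)] B(1-4) prob_B prob_B' pos])
  also have "card {(i, j) \<in> R \<times> R. i \<noteq> j} = card R * (card R - 1)"
    by (rule card_off_diagonal[OF R(1)])
  also have "real (card R * (card R - 1)) * b * b' * (real m * (real m - 1)) / (real (card R) * (real (card R) - 1) * q\<^sup>2)
      = real m * (real m - 1) * (b / q) * (b' / q)"
  proof (cases "2 \<le> m")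
    case True
    then have "real (card R) * (real (card R) - 1) \<noteq> 0" "q \<noteq> 0"
      using prob_successes_eq_pos[OF R pos] by simp_all
    then show ?thesis
      by (simp add: of_nat_diff field_simps power2_eq_square)
  next
    case False
    then have "real m * (real m - 1) = 0"
      by (cases m) auto
    then show ?thesis
      by (simp only: mult_zero_left mult_zero_right div_0)
  qed
  finally show ?thesis .
qed

end

section \<open>The censored two-arm trial under the null hypothesis\<close>

definition censoring_ge :: "real \<Rightarrow> (bool \<times> ereal \<times> ereal) set" where
  "censoring_ge t = {(z, c1, c0). ereal t \<le> (if z then c1 else c0)}"

lemma censoring_ge_treated: "censoring_ge t \<inter> {x. fst x} = {True} \<times> {c. ereal t \<le> c} \<times> UNIV"
  by (auto simp: censoring_ge_def)

lemma censoring_ge_control: "censoring_ge t \<inter> {x. \<not> fst x} = {False} \<times> UNIV \<times> {c. ereal t \<le> c}"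
  by (auto simp: censoring_ge_def)

lemma sets_unitspace_Times: "S \<in> sets (borel \<Otimes>\<^sub>M borel) \<Longrightarrow> {b} \<times> S \<in> sets unitspace"
  unfolding unitspace_def by (intro pair_measureI) auto

lemma sets_censoring_ge_treated: "censoring_ge t \<inter> {x. fst x} \<in> sets unitspace"
  unfolding censoring_ge_treated by (intro sets_unitspace_Times pair_measureI) auto

lemma sets_censoring_ge_control: "censoring_ge t \<inter> {x. \<not> fst x} \<in> sets unitspace"
  unfolding censoring_ge_control by (intro sets_unitspace_Times pair_measureI) auto

lemma censoring_ge_split:
  "censoring_ge t = (censoring_ge t \<inter> {x. fst x}) \<union> (censoring_ge t \<inter> {x. \<not> fst x})"
  by auto

lemma sets_censoring_ge: "censoring_ge t \<in> sets unitspace"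
  using sets_censoring_ge_treated sets_censoring_ge_control by (subst censoring_ge_split) auto

lemma Nat_at_eq_successes:
  assumes "\<forall>i<n. T1 i = T0 i"
  shows "Nat_at n Z T1 T0 C1 C0 t \<omega>
    = successes (unitvec Z C1 C0) (censoring_ge t) {i. i < n \<and> t \<le> T0 i} \<omega>"
  unfolding Nat_at_def successes_def using assms
  by (intro arg_cong[where f = card]) (auto simp: realW_def realT_def realC_def unitvec_def censoring_ge_def)

lemma N1at_eq_successes:
  assumes "\<forall>i<n. T1 i = T0 i"
  shows "N1at n Z T1 T0 C1 C0 t \<omega>
    = successes (unitvec Z C1 C0) (censoring_ge t \<inter> {x. fst x}) {i. i < n \<and> t \<le> T0 i} \<omega>"
  unfolding N1at_def successes_def using assms
  by (intro arg_cong[where f = card]) (auto simp: realW_def realT_def realC_def unitvec_def censoring_ge_def)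

lemma Dat_eq_successes:
  assumes "\<forall>i<n. T1 i = T0 i"
  shows "Dat n Z T1 T0 C1 C0 t \<omega>
    = successes (unitvec Z C1 C0) (censoring_ge t) {i. i < n \<and> T0 i = t} \<omega>"
proof -
  have observed_at_t: "(ereal a \<le> c \<and> min (ereal a) c = ereal t) \<longleftrightarrow> (a = t \<and> ereal t \<le> c)" for a c
    by (cases "ereal a \<le> c") (auto simp: min_def)
  show ?thesis
    unfolding Dat_def successes_def using assms
    by (intro arg_cong[where f = card])
      (auto simp: realDelta_def realW_def realT_def observed_at_t realC_def unitvec_def censoring_ge_def)
qed

lemma Dat_mult_survivors_eq:
  assumes "\<forall>i<n. T1 i = T0 i"
  shows "real (Dat n Z T1 T0 C1 C0 t \<omega>) * (real (Nat_at n Z T1 T0 C1 C0 t \<omega>) - real (Dat n Z T1 T0 C1 C0 t \<omega>))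
    = real (successes (unitvec Z C1 C0) (censoring_ge t) {i. i < n \<and> T0 i = t} \<omega>)
      * real (successes (unitvec Z C1 C0) (censoring_ge t) {i. i < n \<and> t < T0 i} \<omega>)"
proof -
  have "{i. i < n \<and> t \<le> T0 i} = {i. i < n \<and> T0 i = t} \<union> {i. i < n \<and> t < T0 i}"
    by auto
  then have "Nat_at n Z T1 T0 C1 C0 t \<omega>
      = successes (unitvec Z C1 C0) (censoring_ge t) {i. i < n \<and> T0 i = t} \<omega>
        + successes (unitvec Z C1 C0) (censoring_ge t) {i. i < n \<and> t < T0 i} \<omega>"
    unfolding Nat_at_eq_successes[OF assms] by (simp add: successes_Un_index disjoint_iff)
  then show ?thesis
    by (simp add: Dat_eq_successes[OF assms])
qed

lemma N1at_mult_control_eq: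
  assumes "\<forall>i<n. T1 i = T0 i"
  shows "real (N1at n Z T1 T0 C1 C0 t \<omega>) * (real (Nat_at n Z T1 T0 C1 C0 t \<omega>) - real (N1at n Z T1 T0 C1 C0 t \<omega>))
    = real (successes (unitvec Z C1 C0) (censoring_ge t \<inter> {x. fst x}) {i. i < n \<and> t \<le> T0 i} \<omega>)
      * real (successes (unitvec Z C1 C0) (censoring_ge t \<inter> {x. \<not> fst x}) {i. i < n \<and> t \<le> T0 i} \<omega>)"
proof -
  have "Nat_at n Z T1 T0 C1 C0 t \<omega>
      = successes (unitvec Z C1 C0) (censoring_ge t \<inter> {x. fst x}) {i. i < n \<and> t \<le> T0 i} \<omega>
        + successes (unitvec Z C1 C0) (censoring_ge t \<inter> {x. \<not> fst x}) {i. i < n \<and> t \<le> T0 i} \<omega>"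
    unfolding Nat_at_eq_successes[OF assms] by (subst censoring_ge_split) (rule successes_Un_values, auto)
  then show ?thesis
    by (simp add: N1at_eq_successes[OF assms])
qed

lemma measure_Times_prob_space:
  assumes "prob_space A" "prob_space B" "X \<in> sets A" "Y \<in> sets B"
  shows "measure (A \<Otimes>\<^sub>M B) (X \<times> Y) = measure A X * measure B Y"
proof -
  interpret B: prob_space B by fact
  show ?thesis
    using assms B.emeasure_pair_measure_Times[of X A Y] by (simp add: measure_def enn2real_mult)
qed

locale censored_trial = prob_space M for M :: "'a measure" +
  fixes n :: nat and p1 :: real and Z :: "nat \<Rightarrow> 'a \<Rightarrow> bool" and C1 C0 :: "nat \<Rightarrow> 'a \<Rightarrow> ereal"
  assumes indep_units: "indep_vars (\<lambda>_. unitspace) (unitvec Z C1 C0) {..<n}"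
    and distr_unit: "\<And>i. i < n \<Longrightarrow> distr M unitspace (unitvec Z C1 C0 i)
      = distr M (count_space UNIV) (Z i) \<Otimes>\<^sub>M distr M (borel \<Otimes>\<^sub>M borel) (\<lambda>\<omega>. (C1 i \<omega>, C0 i \<omega>))"
    and prob_treated: "\<And>i. i < n \<Longrightarrow> prob {\<omega> \<in> space M. Z i \<omega>} = p1"
    and distr_censoring: "\<And>i j. i < n \<Longrightarrow> j < n \<Longrightarrow>
      distr M (borel \<Otimes>\<^sub>M borel) (\<lambda>\<omega>. (C1 i \<omega>, C0 i \<omega>)) = distr M (borel \<Otimes>\<^sub>M borel) (\<lambda>\<omega>. (C1 j \<omega>, C0 j \<omega>))"
    and n_pos: "0 < n"
begin

lemma measurable_unit: "i < n \<Longrightarrow> unitvec Z C1 C0 i \<in> measurable M unitspace"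
  using indep_units by (simp add: indep_vars_def)

lemma events_unit: "i < n \<Longrightarrow> B \<in> sets unitspace \<Longrightarrow> {\<omega> \<in> space M. unitvec Z C1 C0 i \<omega> \<in> B} \<in> events"
  using measurable_sets[OF measurable_unit] by (simp add: vimage_def Int_def conj_commute)

lemma measurable_treatment: "i < n \<Longrightarrow> Z i \<in> measurable M (count_space UNIV)"
  using measurable_compose[OF measurable_unit[unfolded unitspace_def] measurable_fst]
  by (simp add: unitvec_def)

lemma measurable_censoring: "i < n \<Longrightarrow> (\<lambda>\<omega>. (C1 i \<omega>, C0 i \<omega>)) \<in> measurable M (borel \<Otimes>\<^sub>M borel)"
  using measurable_compose[OF measurable_unit[unfolded unitspace_def] measurable_snd]
  by (simp add: unitvec_def)

lemma prob_unit_Times: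
  assumes i: "i < n" and S: "S \<in> sets (borel \<Otimes>\<^sub>M borel)"
  shows "prob {\<omega> \<in> space M. unitvec Z C1 C0 i \<omega> \<in> {b} \<times> S}
    = prob {\<omega> \<in> space M. Z i \<omega> = b} * prob {\<omega> \<in> space M. (C1 0 \<omega>, C0 0 \<omega>) \<in> S}"
proof -
  have "prob {\<omega> \<in> space M. unitvec Z C1 C0 i \<omega> \<in> {b} \<times> S}
      = measure (distr M unitspace (unitvec Z C1 C0 i)) ({b} \<times> S)"
    using measure_distr[OF measurable_unit[OF i] sets_unitspace_Times[OF S]]
    by (simp add: vimage_def Int_def conj_commute)
  also have "\<dots> = measure (distr M (count_space UNIV) (Z i)) {b}
      * measure (distr M (borel \<Otimes>\<^sub>M borel) (\<lambda>\<omega>. (C1 i \<omega>, C0 i \<omega>))) S"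
    using S measurable_treatment[OF i] measurable_censoring[OF i]
    by (simp add: distr_unit[OF i] measure_Times_prob_space prob_space_distr)
  also have "\<dots> = measure (distr M (count_space UNIV) (Z i)) {b}
      * measure (distr M (borel \<Otimes>\<^sub>M borel) (\<lambda>\<omega>. (C1 0 \<omega>, C0 0 \<omega>))) S"
    by (simp only: distr_censoring[OF i n_pos])
  also have "\<dots> = prob {\<omega> \<in> space M. Z i \<omega> = b} * prob {\<omega> \<in> space M. (C1 0 \<omega>, C0 0 \<omega>) \<in> S}"
    using measure_distr[OF measurable_treatment[OF i], of "{b}"] measure_distr[OF measurable_censoring[OF n_pos] S]
    by (simp add: vimage_def Int_def conj_commute)
  finally show ?thesis .
qed

lemma prob_treated_censoring_ge:
  "i < n \<Longrightarrow> prob {\<omega> \<in> space M. unitvec Z C1 C0 i \<omega> \<in> censoring_ge t \<inter> {x. fst x}} = p1 * Gsurv M C1 t"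
  unfolding censoring_ge_treated
  by (subst prob_unit_Times) (auto simp: prob_treated Gsurv_def)

lemma prob_control_censoring_ge:
  assumes "i < n"
  shows "prob {\<omega> \<in> space M. unitvec Z C1 C0 i \<omega> \<in> censoring_ge t \<inter> {x. \<not> fst x}} = (1 - p1) * Gsurv M C0 t"
proof -
  have "{\<omega> \<in> space M. \<not> Z i \<omega>} = space M - {\<omega> \<in> space M. Z i \<omega>}"
    by auto
  moreover have "{\<omega> \<in> space M. Z i \<omega>} \<in> events"
    using events_unit[OF assms sets_unitspace_Times[OF sets.top, of True]] by (simp add: unitvec_def space_pair_measure)
  ultimately have "prob {\<omega> \<in> space M. \<not> Z i \<omega>} = 1 - p1"
    using prob_compl prob_treated[OF assms] by simp
  then show ?thesis
    unfolding censoring_ge_control using assms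
    by (subst prob_unit_Times) (auto simp: Gsurv_def)
qed

lemma indep_trials_censoring_ge:
  "indep_trials M unitspace (unitvec Z C1 C0) {..<n} (censoring_ge t) (p1 * Gsurv M C1 t + (1 - p1) * Gsurv M C0 t)"
proof
  show "indep_vars (\<lambda>_. unitspace) (unitvec Z C1 C0) {..<n}"
    by (rule indep_units)
  show "censoring_ge t \<in> sets unitspace"
    by (rule sets_censoring_ge)
  fix i assume "i \<in> {..<n}"
  then have i: "i < n" by simp
  have "{\<omega> \<in> space M. unitvec Z C1 C0 i \<omega> \<in> censoring_ge t}
      = {\<omega> \<in> space M. unitvec Z C1 C0 i \<omega> \<in> censoring_ge t \<inter> {x. fst x}}
        \<union> {\<omega> \<in> space M. unitvec Z C1 C0 i \<omega> \<in> censoring_ge t \<inter> {x. \<not> fst x}}"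
    by auto
  also have "prob \<dots> = prob {\<omega> \<in> space M. unitvec Z C1 C0 i \<omega> \<in> censoring_ge t \<inter> {x. fst x}}
      + prob {\<omega> \<in> space M. unitvec Z C1 C0 i \<omega> \<in> censoring_ge t \<inter> {x. \<not> fst x}}"
    by (rule finite_measure_Union[OF events_unit[OF i sets_censoring_ge_treated]
          events_unit[OF i sets_censoring_ge_control]]) auto
  also have "\<dots> = p1 * Gsurv M C1 t + (1 - p1) * Gsurv M C0 t"
    by (simp only: prob_treated_censoring_ge[OF i] prob_control_censoring_ge[OF i])
  finally show "prob {\<omega> \<in> space M. unitvec Z C1 C0 i \<omega> \<in> censoring_ge t} = p1 * Gsurv M C1 t + (1 - p1) * Gsurv M C0 t" .
qed

lemma cond_exp_deaths_times_survivors: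
  assumes H0: "\<forall>i<n. T1 i = T0 i"
    and pos: "prob {\<omega> \<in> space M. Nat_at n Z T1 T0 C1 C0 t \<omega> = m} > 0"
  shows "disc_cond_exp M
      (\<lambda>\<omega>. real (Dat n Z T1 T0 C1 C0 t \<omega>) *
        (real (Nat_at n Z T1 T0 C1 C0 t \<omega>) - real (Dat n Z T1 T0 C1 C0 t \<omega>)))
      (Nat_at n Z T1 T0 C1 C0 t) m
    = real m * (real m - 1) * h_at n T0 t * (1 - h_at n T0 t) * real (n_at n T0 t) / (real (n_at n T0 t) - 1)"
proof -
  interpret trials: indep_trials M unitspace "unitvec Z C1 C0" "{..<n}" "censoring_ge t"
      "p1 * Gsurv M C1 t + (1 - p1) * Gsurv M C0 t"
    by (rule indep_trials_censoring_ge)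
  define R where "R = {i. i < n \<and> t \<le> T0 i}"
  define D where "D = {i. i < n \<and> T0 i = t}"
  define L where "L = {i. i < n \<and> t < T0 i}"
  let ?at_risk = "successes (unitvec Z C1 C0) (censoring_ge t)"
  have R: "finite R" "R \<subseteq> {..<n}" "D \<subseteq> R" "L \<subseteq> R" "D \<inter> L = {}"
    by (auto simp: R_def D_def L_def)
  have Nat_at: "Nat_at n Z T1 T0 C1 C0 t = ?at_risk R"
    unfolding R_def by (rule ext, rule Nat_at_eq_successes[OF H0])
  have integrand: "(\<lambda>\<omega>. real (Dat n Z T1 T0 C1 C0 t \<omega>) *
        (real (Nat_at n Z T1 T0 C1 C0 t \<omega>) - real (Dat n Z T1 T0 C1 C0 t \<omega>)))
      = (\<lambda>\<omega>. real (?at_risk D \<omega>) * real (?at_risk L \<omega>))"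
    unfolding D_def L_def by (rule ext, rule Dat_mult_survivors_eq[OF H0])
  have cond: "disc_cond_exp M (\<lambda>\<omega>. real (?at_risk D \<omega>) * real (?at_risk L \<omega>)) (?at_risk R) m
      = real m * (real m - 1) * real (card D) * real (card L) / (real (card R) * (real (card R) - 1))"
    using pos R by (intro trials.cond_exp_successes_disjoint_groups) (auto simp: Nat_at)
  have card_L: "real (card L) = real (card R) - real (card D)"
  proof -
    have "R = D \<union> L"
      by (auto simp: R_def D_def L_def)
    then have "card R = card D + card L"
      using R finite_subset by (simp add: card_Un_disjoint)
    then show ?thesis
      by simp
  qed
  have n_at: "n_at n T0 t = card R" and h_at: "h_at n T0 t = real (card D) / real (card R)"
    by (simp_all add: n_at_def h_at_def d_at_def R_def D_def)
  show ?thesis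
    unfolding integrand unfolding Nat_at cond card_L n_at h_at
    by (cases "real (card R) * (real (card R) - 1) = 0") (auto simp: field_simps)
qed

lemma cond_exp_treated_times_control:
  assumes H0: "\<forall>i<n. T1 i = T0 i"
    and pos: "prob {\<omega> \<in> space M. Nat_at n Z T1 T0 C1 C0 t \<omega> = m} > 0"
  shows "disc_cond_exp M
      (\<lambda>\<omega>. real (N1at n Z T1 T0 C1 C0 t \<omega>) *
        (real (Nat_at n Z T1 T0 C1 C0 t \<omega>) - real (N1at n Z T1 T0 C1 C0 t \<omega>)))
      (Nat_at n Z T1 T0 C1 C0 t) m
    = real m * (real m - 1) * phi_at M p1 C1 C0 t * (1 - phi_at M p1 C1 C0 t)"
proof -
  define q where "q = p1 * Gsurv M C1 t + (1 - p1) * Gsurv M C0 t"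
  interpret trials: indep_trials M unitspace "unitvec Z C1 C0" "{..<n}" "censoring_ge t" q
    unfolding q_def by (rule indep_trials_censoring_ge)
  define R where "R = {i. i < n \<and> t \<le> T0 i}"
  let ?treated = "censoring_ge t \<inter> {x. fst x}" and ?control = "censoring_ge t \<inter> {x. \<not> fst x}"
  have Nat_at: "Nat_at n Z T1 T0 C1 C0 t = successes (unitvec Z C1 C0) (censoring_ge t) R"
    unfolding R_def by (rule ext, rule Nat_at_eq_successes[OF H0])
  have integrand: "(\<lambda>\<omega>. real (N1at n Z T1 T0 C1 C0 t \<omega>) *
        (real (Nat_at n Z T1 T0 C1 C0 t \<omega>) - real (N1at n Z T1 T0 C1 C0 t \<omega>)))
      = (\<lambda>\<omega>. real (successes (unitvec Z C1 C0) ?treated R \<omega>) * real (successes (unitvec Z C1 C0) ?control R \<omega>))"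
    unfolding R_def by (rule ext, rule N1at_mult_control_eq[OF H0])
  have "disc_cond_exp M
      (\<lambda>\<omega>. real (successes (unitvec Z C1 C0) ?treated R \<omega>) * real (successes (unitvec Z C1 C0) ?control R \<omega>))
      (successes (unitvec Z C1 C0) (censoring_ge t) R) m
      = real m * (real m - 1) * (p1 * Gsurv M C1 t / q) * ((1 - p1) * Gsurv M C0 t / q)"
    using pos
    by (intro trials.cond_exp_successes_disjoint_values)
      (auto simp: R_def Nat_at sets_censoring_ge_treated sets_censoring_ge_control
        prob_treated_censoring_ge[simplified] prob_control_censoring_ge[simplified])
  moreover have "phi_at M p1 C1 C0 t = p1 * Gsurv M C1 t / q"
    by (simp add: phi_at_def q_def)
  moreover have "(1 - p1) * Gsurv M C0 t / q = 1 - p1 * Gsurv M C1 t / q" if "q \<noteq> 0"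
  proof -
    have "(1 - p1) * Gsurv M C0 t / q = (q - p1 * Gsurv M C1 t) / q"
      by (simp add: q_def)
    also have "\<dots> = 1 - p1 * Gsurv M C1 t / q"
      using that by (simp add: diff_divide_distrib)
    finally show ?thesis .
  qed
  ultimately show ?thesis
    unfolding integrand unfolding Nat_at by (cases "q = 0") simp_all
qed

end

theorem lemmaA5:
  fixes M :: "'a measure" and n :: nat and p1 :: real
    and T1 T0 :: "nat \<Rightarrow> real"
    and Z :: "nat \<Rightarrow> 'a \<Rightarrow> bool" and C1 C0 :: "nat \<Rightarrow> 'a \<Rightarrow> ereal"
    and t :: real and m :: nat
  assumes "prob_space M"
    and "0 < p1" and "p1 < 1"
    and "\<forall>i<n. T1 i \<ge> 0 \<and> T0 i \<ge> 0"
    and "\<forall>i<n. \<forall>\<omega>\<in>space M. C1 i \<omega> \<ge> 0 \<and> C0 i \<omega> \<ge> 0"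
    \<comment> \<open>measurability, and mutual independence of Z_1,...,Z_n,(C_1(1),C_1(0)),...,(C_n(1),C_n(0))\<close>
    and "\<forall>i<n. unitvec Z C1 C0 i \<in> measurable M unitspace"
    and "prob_space.indep_vars M (\<lambda>_. unitspace) (unitvec Z C1 C0) {..<n}"
    and "\<forall>i<n. distr M unitspace (unitvec Z C1 C0 i)
               = distr M (count_space UNIV) (Z i) \<Otimes>\<^sub>M distr M (borel \<Otimes>\<^sub>M borel) (\<lambda>\<omega>. (C1 i \<omega>, C0 i \<omega>))"
    \<comment> \<open>Assumption 1: Z_i ~ Bernoulli(p1)\<close>
    and "\<forall>i<n. measure M {\<omega> \<in> space M. Z i \<omega>} = p1"
    \<comment> \<open>Assumption 2: the censoring pairs are identically distributed\<close>
    and "\<forall>i<n. \<forall>j<n. distr M (borel \<Otimes>\<^sub>M borel) (\<lambda>\<omega>. (C1 i \<omega>, C0 i \<omega>))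
                     = distr M (borel \<Otimes>\<^sub>M borel) (\<lambda>\<omega>. (C1 j \<omega>, C0 j \<omega>))"
    \<comment> \<open>null hypothesis H0\<close>
    and "\<forall>i<n. T1 i = T0 i"
    \<comment> \<open>t = t_k is one of the distinct values of T(0); we condition on N_k = m\<close>
    and "t \<in> T0 ` {..<n}"
    and "measure M {\<omega> \<in> space M. Nat_at n Z T1 T0 C1 C0 t \<omega> = m} > 0"
  shows "(disc_cond_exp M
           (\<lambda>\<omega>. real (Dat n Z T1 T0 C1 C0 t \<omega>) *
                 (real (Nat_at n Z T1 T0 C1 C0 t \<omega>) - real (Dat n Z T1 T0 C1 C0 t \<omega>)))
           (Nat_at n Z T1 T0 C1 C0 t) m
         = real m * (real m - 1) * h_at n T0 t * (1 - h_at n T0 t)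
             * real (n_at n T0 t) / (real (n_at n T0 t) - 1))
       \<and> (disc_cond_exp M
           (\<lambda>\<omega>. real (N1at n Z T1 T0 C1 C0 t \<omega>) *
                 (real (Nat_at n Z T1 T0 C1 C0 t \<omega>) - real (N1at n Z T1 T0 C1 C0 t \<omega>)))
           (Nat_at n Z T1 T0 C1 C0 t) m
         = real m * (real m - 1) * phi_at M p1 C1 C0 t * (1 - phi_at M p1 C1 C0 t))"
proof -
  have "0 < n"
    using assms(12) by auto
  with assms(1,7-10) interpret censored_trial M n p1 Z C1 C0
    unfolding censored_trial_def censored_trial_axioms_def by blast
  show ?thesis
    using cond_exp_deaths_times_survivors[OF assms(11,13)] cond_exp_treated_times_control[OF assms(11,13)]
    by blast
qed

end
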